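(* Fix $V>0$. For $x\in\mathbb N$ let $\delta=V/x$ and consider the discrete first-price auction with $n=2$ bidders, in the model without ties, with values drawn independently and uniformly from $X_\delta=\{0,\delta,2\delta,\dots,x\delta=V\}$ and bids in $X_\delta$. Let $\beta_\delta$ be any symmetric equilibrium of this game. Then $\max_{v\in X_\delta}|\beta_\delta(v)-v/2|\le\delta/2$, so $\beta_\delta$ converges uniformly to the continuous equilibrium bidding function $v\mapsto v/2$ as $\delta\to0$; and the expected highest bid $\mathbb E[\max\{\beta_\delta(v_1),\beta_\delta(v_2)\}]$ converges, as $\delta\to0$, to $V/3$, the expected highest bid in the continuous first-price auction with two bidders whose values are i.i.d. uniform on $[0,V]$ and who bid $v/2$.
   Context: Model. Two risk-neutral bidders compete for one indivisible object. Values and bids lie in $X_\delta$; values are i.i.d. uniform on $X_\delta$. A strategy is a bidding function $\beta:X_\delta\to X_\delta$. In the model without ties, a bidder wins iff their bid is strictly higher than the opponent's (if tied, nobody wins). In the first-price auction, a bidder with value $v_i$ bidding $b_i$ gets expected payoff $(v_i-b_i)\Pr(i\text{ wins})$. An equilibrium is a profile of bidding functions such that each bidder's bidding function maximises their expected payoff given the other's (a pure-strategy Bayes–Nash equilibrium) and such that no bidder uses a weakly dominated bidding function (a bidding function is weakly dominated if some other bidding function yields at least as high expected payoff against every opponent bidding function, and strictly higher against some). A symmetric equilibrium is an equilibrium in which both bidders use the same bidding function. *)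

theory Defs
  imports "HOL-Analysis.Analysis"
begin

text \<open>Bidding functions are real functions; only their values on the grid matter,
  and a (feasible) bidding function maps the grid into the grid.\<close>

definition grid :: "real \<Rightarrow> nat \<Rightarrow> real set" where
  "grid V x = (\<lambda>k. real k * (V / real x)) ` {0..x}"

definition is_strategy :: "real \<Rightarrow> nat \<Rightarrow> (real \<Rightarrow> real) \<Rightarrow> bool" where
  "is_strategy V x \<beta> \<longleftrightarrow> (\<forall>v\<in>grid V x. \<beta> v \<in> grid V x)"

text \<open>Probability that bid b strictly beats the opponent using \<gamma>
  (opponent's value uniform on the grid; ties: nobody wins).\<close>
definition win_prob :: "real \<Rightarrow> nat \<Rightarrow> real \<Rightarrow> (real \<Rightarrow> real) \<Rightarrow> real" where
  "win_prob V x b \<gamma> = real (card {w \<in> grid V x. \<gamma> w < b}) / real (card (grid V x))"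

definition payoff :: "real \<Rightarrow> nat \<Rightarrow> (real \<Rightarrow> real) \<Rightarrow> (real \<Rightarrow> real) \<Rightarrow> real" where
  "payoff V x \<beta> \<gamma> =
     (\<Sum>v\<in>grid V x. (v - \<beta> v) * win_prob V x (\<beta> v) \<gamma>) / real (card (grid V x))"

definition best_response :: "real \<Rightarrow> nat \<Rightarrow> (real \<Rightarrow> real) \<Rightarrow> (real \<Rightarrow> real) \<Rightarrow> bool" where
  "best_response V x \<beta> \<gamma> \<longleftrightarrow> is_strategy V x \<beta> \<and>
     (\<forall>\<beta>'. is_strategy V x \<beta>' \<longrightarrow> payoff V x \<beta>' \<gamma> \<le> payoff V x \<beta> \<gamma>)"

definition weakly_dominated :: "real \<Rightarrow> nat \<Rightarrow> (real \<Rightarrow> real) \<Rightarrow> bool" where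
  "weakly_dominated V x \<beta> \<longleftrightarrow> (\<exists>\<beta>'. is_strategy V x \<beta>' \<and>
     (\<forall>\<gamma>. is_strategy V x \<gamma> \<longrightarrow> payoff V x \<beta> \<gamma> \<le> payoff V x \<beta>' \<gamma>) \<and>
     (\<exists>\<gamma>. is_strategy V x \<gamma> \<and> payoff V x \<beta> \<gamma> < payoff V x \<beta>' \<gamma>))"

definition equilibrium :: "real \<Rightarrow> nat \<Rightarrow> (real \<Rightarrow> real) \<Rightarrow> (real \<Rightarrow> real) \<Rightarrow> bool" where
  "equilibrium V x \<beta>1 \<beta>2 \<longleftrightarrow>
     best_response V x \<beta>1 \<beta>2 \<and> best_response V x \<beta>2 \<beta>1 \<and>
     \<not> weakly_dominated V x \<beta>1 \<and> \<not> weakly_dominated V x \<beta>2"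

definition symmetric_equilibrium :: "real \<Rightarrow> nat \<Rightarrow> (real \<Rightarrow> real) \<Rightarrow> bool" where
  "symmetric_equilibrium V x \<beta> \<longleftrightarrow> equilibrium V x \<beta> \<beta>"

definition expected_highest_bid :: "real \<Rightarrow> nat \<Rightarrow> (real \<Rightarrow> real) \<Rightarrow> real" where
  "expected_highest_bid V x \<beta> =
     (\<Sum>v1\<in>grid V x. \<Sum>v2\<in>grid V x. max (\<beta> v1) (\<beta> v2)) / (real (card (grid V x)))^2"

end

theory Submission
  imports Defs "HOL-Real_Asymp.Real_Asymp"
begin

(*
  Write values and bids as multiples k d, c d of the step d = V / x. If the opponent plays
  b (in index form) and N c counts the opponent types bidding below c, the type k earns
  d / (x + 1) * (k - c) * N c by bidding c d. Comparing the best replies of two types against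
  each other's bids shows that b is monotone. Undominatedness pins down the start of the
  grid: b 0 = 0, b 1 \<le> 1 and 0 < b k < k for k \<ge> 2. Strong induction on k then gives
  |2 b k - k| \<le> 1: by monotonicity and the induction hypothesis, a type bidding more than
  (k + 1) / 2 gains by shading one step (it gives up at most one winning type), and a type
  bidding less than (k - 1) / 2 gains by raising one step (it then beats all of 0, ..., k).
  Finally the expected highest bid moves by at most e when the bids move by at most e, and for
  the bid v / 2 it equals V / 3 + V / (12 (x + 1)).
*)

section \<open>Best replies in index form\<close>

definition count_below :: "nat \<Rightarrow> (nat \<Rightarrow> nat) \<Rightarrow> nat \<Rightarrow> nat" where
  "count_below x b c = card {w \<in> {0..x}. b w < c}"

text \<open>Up to the positive factor \<open>d / (x + 1)\<close>, \<open>(k - c) * count_below x b c\<close> is the payoff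
  of bid \<open>c d\<close> for value \<open>k d\<close> against an opponent whose bid at value \<open>w d\<close> is \<open>b w d\<close>.\<close>
locale index_bidding =
  fixes x :: nat and b :: "nat \<Rightarrow> nat"
  assumes bid_le_top: "k \<le> x \<Longrightarrow> b k \<le> x"
    and best_reply: "k \<le> x \<Longrightarrow> c \<le> x \<Longrightarrow>
      (int k - int c) * int (count_below x b c) \<le> (int k - int (b k)) * int (count_below x b (b k))"
begin

lemma bid_mono:
  assumes "k \<le> k'" "k' \<le> x"
  shows "b k \<le> b k'"
proof (rule ccontr)
  assume "\<not> b k \<le> b k'"
  hence lt: "b k' < b k" by simp
  define A where "A = int (count_below x b (b k))"
  define B where "B = int (count_below x b (b k'))"
  have "{w\<in>{0..x}. b w < b k'} \<subset> {w\<in>{0..x}. b w < b k}"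
    using lt assms by auto
  hence "B < A"
    unfolding A_def B_def count_below_def by (simp add: psubset_card_mono)
  moreover have "(int k - int (b k')) * B \<le> (int k - int (b k)) * A"
    using best_reply[of k "b k'"] bid_le_top assms unfolding A_def B_def by simp
  moreover have "(int k' - int (b k)) * A \<le> (int k' - int (b k')) * B"
    using best_reply[of k' "b k"] bid_le_top assms unfolding A_def B_def by simp
  ultimately have "(int k' - int k) * A \<le> (int k' - int k) * B"
    \<comment> \<open>sum of the two best-reply inequalities\<close>
    by (simp add: algebra_simps)
  moreover have "k < k'"
    using assms lt by (metis le_neq_implies_less less_irrefl)
  ultimately show False
    using \<open>B < A\<close> by (smt (verit) mult_strict_left_mono of_nat_less_iff)
qed

lemma count_below_bid_le:
  assumes "k \<le> x"
  shows "count_below x b (b k) \<le> k"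
proof -
  have "{w\<in>{0..x}. b w < b k} \<subseteq> {0..<k}"
    using bid_mono assms by (force simp: not_less[symmetric])
  hence "count_below x b (b k) \<le> card {0..<k}"
    unfolding count_below_def by (intro card_mono) auto
  thus ?thesis by simp
qed

lemma count_below_Suc_bid_ge:
  assumes "k \<le> x"
  shows "k + 1 \<le> count_below x b (Suc (b k))"
proof -
  have "{0..k} \<subseteq> {w\<in>{0..x}. b w < Suc (b k)}"
    using bid_mono assms by (auto simp: less_Suc_eq_le)
  hence "card {0..k} \<le> count_below x b (Suc (b k))"
    unfolding count_below_def by (intro card_mono) auto
  thus ?thesis by simp
qed

lemma no_overbid:
  assumes k: "k \<le> x" "b k < k"
    and IH: "\<And>w. w < k \<Longrightarrow> \<bar>2 * int (b w) - int w\<bar> \<le> 1"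
  shows "2 * b k \<le> k + 1"
proof (rule ccontr)
  assume "\<not> ?thesis"
  hence hi: "k + 2 \<le> 2 * b k" by simp
  define c where "c = b k"
  have "{0..<k - 1} \<subseteq> {w\<in>{0..x}. b w < c - 1}"
  proof
    fix w assume "w \<in> {0..<k - 1}"
    hence "w < k - 1" by simp
    with IH[of w] hi have "b w < c - 1"
      unfolding c_def by linarith
    with \<open>w < k - 1\<close> k show "w \<in> {w\<in>{0..x}. b w < c - 1}" by simp
  qed
  hence "card {0..<k - 1} \<le> count_below x b (c - 1)"
    unfolding count_below_def by (intro card_mono) auto
  hence "k - 1 \<le> count_below x b (c - 1)" by simp
  hence "(int k - int (c - 1)) * (int k - 1) \<le> (int k - int (c - 1)) * int (count_below x b (c - 1))"
    using k c_def by (intro mult_left_mono) auto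
  also have "\<dots> \<le> (int k - int c) * int (count_below x b c)"
    using best_reply[of k "c - 1"] k unfolding c_def by simp
  also have "\<dots> \<le> (int k - int c) * int k"
    using count_below_bid_le[OF k(1)] k unfolding c_def by (intro mult_left_mono) auto
  finally have "int c \<le> 1"
    using hi k c_def by (simp add: algebra_simps of_nat_diff)
  thus False
    using hi k c_def by linarith
qed

lemma no_underbid:
  assumes k: "k \<le> x"
    and IH: "\<And>w. w < k \<Longrightarrow> \<bar>2 * int (b w) - int w\<bar> \<le> 1"
  shows "k \<le> 2 * b k + 1"
proof (rule ccontr)
  assume "\<not> ?thesis"
  then obtain j where j: "k = 2 * b k + 2 + j"
    using le_Suc_ex[of "2 * b k + 2" k] by auto
  define c where "c = b k"
  have "{w\<in>{0..x}. b w < c} \<subseteq> {0..<2 * c}"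
  proof
    fix w assume w: "w \<in> {w\<in>{0..x}. b w < c}"
    hence "w < k"
      using bid_mono[of k w] unfolding c_def by (auto simp: not_less[symmetric])
    with IH[of w] w show "w \<in> {0..<2 * c}" by auto
  qed
  hence "count_below x b c \<le> card {0..<2 * c}"
    unfolding count_below_def by (intro card_mono) auto
  hence "count_below x b c \<le> 2 * c" by simp
  have "(int k - int (c + 1)) * (int k + 1) \<le> (int k - int (c + 1)) * int (count_below x b (c + 1))"
    using count_below_Suc_bid_ge[OF k] j unfolding c_def by (intro mult_left_mono) auto
  also have "\<dots> \<le> (int k - int c) * int (count_below x b c)"
    using best_reply[of k "c + 1"] k j unfolding c_def by simp
  also have "\<dots> \<le> (int k - int c) * (2 * int c)"
    using \<open>count_below x b c \<le> 2 * c\<close> j unfolding c_def by (intro mult_left_mono) auto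
  finally have "(int k - int (c + 1)) * (int k + 1) \<le> (int k - int c) * (2 * int c)" .
  moreover have "0 \<le> int c * int j" "0 \<le> int j * int j" by simp_all
  ultimately show False
    using j unfolding c_def[symmetric] by (simp add: algebra_simps)
qed

lemma index_bid_near_half:
  assumes bid0: "b 0 = 0" and bid1: "1 \<le> x \<Longrightarrow> b 1 \<le> 1"
    and bid_between: "\<And>k. 2 \<le> k \<Longrightarrow> k \<le> x \<Longrightarrow> 1 \<le> b k \<and> b k < k"
  shows "k \<le> x \<Longrightarrow> \<bar>2 * int (b k) - int k\<bar> \<le> 1"
proof (induction k rule: less_induct)
  case (less k)
  show ?case
  proof (cases "k < 2")
    case True
    then show ?thesis using bid0 bid1 less.prems by (cases k) auto
  next
    case False
    hence "2 * b k \<le> k + 1" "k \<le> 2 * b k + 1"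
      using no_overbid no_underbid bid_between less by auto
    thus ?thesis by linarith
  qed
qed

end

section \<open>The discrete auction\<close>

lemma inj_on_grid_points: "V > 0 \<Longrightarrow> 1 \<le> x \<Longrightarrow> inj_on (\<lambda>k. real k * (V / real x)) A"
  by (auto simp: inj_on_def)

lemma finite_grid: "finite (grid V x)"
  unfolding grid_def by simp

lemma card_grid: "V > 0 \<Longrightarrow> 1 \<le> x \<Longrightarrow> card (grid V x) = x + 1"
  unfolding grid_def by (subst card_image[OF inj_on_grid_points]) auto

lemma grid_nonneg: "V > 0 \<Longrightarrow> v \<in> grid V x \<Longrightarrow> 0 \<le> v"
  unfolding grid_def by auto

lemma zero_in_grid: "0 \<in> grid V x"
  unfolding grid_def by force

lemma grid_point: "k \<le> x \<Longrightarrow> real k * (V / real x) \<in> grid V x"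
  unfolding grid_def by auto

lemma win_prob_nonneg: "0 \<le> win_prob V x b \<gamma>"
  unfolding win_prob_def by simp

lemma win_prob_nonpos_bid:
  "V > 0 \<Longrightarrow> is_strategy V x \<gamma> \<Longrightarrow> b \<le> 0 \<Longrightarrow> win_prob V x b \<gamma> = 0"
proof -
  assume "V > 0" "is_strategy V x \<gamma>" "b \<le> 0"
  hence "{w \<in> grid V x. \<gamma> w < b} = {}"
    unfolding is_strategy_def using grid_nonneg by fastforce
  thus ?thesis unfolding win_prob_def by (metis card.empty div_0 of_nat_0)
qed

lemma win_prob_against_zero_bidder:
  "V > 0 \<Longrightarrow> 1 \<le> x \<Longrightarrow> 0 < b \<Longrightarrow> win_prob V x b (\<lambda>_. 0) = 1"
  unfolding win_prob_def using card_grid[of V x] by simp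

lemma is_strategy_zero: "is_strategy V x (\<lambda>_. 0)"
  unfolding is_strategy_def using zero_in_grid by auto

lemma bid_payoff_nonpos:
  assumes "V > 0" "is_strategy V x \<gamma>" "b \<le> 0 \<or> v \<le> b"
  shows "(v - b) * win_prob V x b \<gamma> \<le> 0"
  using assms(3)
proof
  assume "b \<le> 0"
  thus ?thesis using win_prob_nonpos_bid[OF assms(1,2)] by simp
next
  assume "v \<le> b"
  thus ?thesis by (intro mult_nonpos_nonneg) (simp_all add: win_prob_nonneg)
qed

lemma payoff_fun_upd:
  assumes "v \<in> grid V x"
  shows "payoff V x (\<beta>(v := c)) \<gamma> = payoff V x \<beta> \<gamma> +
     ((v - c) * win_prob V x c \<gamma> - (v - \<beta> v) * win_prob V x (\<beta> v) \<gamma>) / real (card (grid V x))"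
proof -
  let ?T = "\<lambda>\<beta> w. (w - \<beta> w) * win_prob V x (\<beta> w) \<gamma>"
  have "(\<Sum>w\<in>grid V x. ?T (\<beta>(v := c)) w) = ?T (\<beta>(v := c)) v + (\<Sum>w\<in>grid V x - {v}. ?T (\<beta>(v := c)) w)"
    using finite_grid assms by (rule sum.remove)
  also have "(\<Sum>w\<in>grid V x - {v}. ?T (\<beta>(v := c)) w) = (\<Sum>w\<in>grid V x - {v}. ?T \<beta> w)"
    by (rule sum.cong) auto
  also have "(\<Sum>w\<in>grid V x - {v}. ?T \<beta> w) = (\<Sum>w\<in>grid V x. ?T \<beta> w) - ?T \<beta> v"
    using assms by (simp add: sum_diff1 finite_grid)
  finally show ?thesis
    unfolding payoff_def by (simp add: diff_divide_distrib add_divide_distrib)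
qed

lemma best_response_pointwise:
  assumes "V > 0" "1 \<le> x" "best_response V x \<beta> \<gamma>" "v \<in> grid V x" "c \<in> grid V x"
  shows "(v - c) * win_prob V x c \<gamma> \<le> (v - \<beta> v) * win_prob V x (\<beta> v) \<gamma>"
proof -
  have "is_strategy V x (\<beta>(v := c))"
    using assms unfolding is_strategy_def best_response_def by auto
  hence "payoff V x (\<beta>(v := c)) \<gamma> \<le> payoff V x \<beta> \<gamma>"
    using assms(3) unfolding best_response_def by blast
  thus ?thesis
    using card_grid[OF assms(1,2)] unfolding payoff_fun_upd[OF assms(4)] by (simp add: divide_le_0_iff)
qed

lemma weakly_dominated_fun_upd:
  assumes "V > 0" "1 \<le> x" "is_strategy V x \<beta>" "v \<in> grid V x" "c \<in> grid V x"
    and le: "\<And>\<gamma>. is_strategy V x \<gamma> \<Longrightarrow> (v - \<beta> v) * win_prob V x (\<beta> v) \<gamma> \<le> (v - c) * win_prob V x c \<gamma>"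
    and lt: "(v - \<beta> v) * win_prob V x (\<beta> v) (\<lambda>_. 0) < (v - c) * win_prob V x c (\<lambda>_. 0)"
  shows "weakly_dominated V x \<beta>"
proof -
  have card: "0 < real (card (grid V x))" using card_grid[OF assms(1,2)] by simp
  have "is_strategy V x (\<beta>(v := c))" using assms(3,5) unfolding is_strategy_def by auto
  moreover have "\<forall>\<gamma>. is_strategy V x \<gamma> \<longrightarrow> payoff V x \<beta> \<gamma> \<le> payoff V x (\<beta>(v := c)) \<gamma>"
    using le card unfolding payoff_fun_upd[OF assms(4)] by simp
  moreover have "payoff V x \<beta> (\<lambda>_. 0) < payoff V x (\<beta>(v := c)) (\<lambda>_. 0)"
    using lt card unfolding payoff_fun_upd[OF assms(4)] by simp
  ultimately show ?thesis
    unfolding weakly_dominated_def using is_strategy_zero by blast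
qed

text \<open>Overbidding is weakly dominated by bidding \<open>0\<close>, which never wins.\<close>
lemma undominated_bid_le_value:
  assumes "V > 0" "1 \<le> x" "is_strategy V x \<beta>" "\<not> weakly_dominated V x \<beta>" "v \<in> grid V x"
  shows "\<beta> v \<le> v"
proof (rule ccontr)
  assume over: "\<not> \<beta> v \<le> v"
  have "0 \<le> v" using grid_nonneg assms by blast
  have "weakly_dominated V x \<beta>"
  proof (rule weakly_dominated_fun_upd[OF assms(1,2,3,5) zero_in_grid])
    show "(v - \<beta> v) * win_prob V x (\<beta> v) \<gamma> \<le> (v - 0) * win_prob V x 0 \<gamma>"
      if "is_strategy V x \<gamma>" for \<gamma>
      using bid_payoff_nonpos[OF assms(1) that] win_prob_nonpos_bid[OF assms(1) that] over by simp
    show "(v - \<beta> v) * win_prob V x (\<beta> v) (\<lambda>_. 0) < (v - 0) * win_prob V x 0 (\<lambda>_. 0)"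
      using win_prob_against_zero_bidder[OF assms(1,2)] win_prob_nonpos_bid[OF assms(1) is_strategy_zero]
        over \<open>0 \<le> v\<close> by simp
  qed
  with assms(4) show False ..
qed

text \<open>Bidding \<open>0\<close> or at least the value never earns anything, whereas the bid \<open>c\<close> earns
  something against the zero bidder.\<close>
lemma undominated_bid_strictly_between:
  assumes "V > 0" "1 \<le> x" "is_strategy V x \<beta>" "\<not> weakly_dominated V x \<beta>" "v \<in> grid V x"
    and c: "c \<in> grid V x" "0 < c" "c < v"
  shows "0 < \<beta> v \<and> \<beta> v < v"
proof (rule ccontr)
  assume "\<not> ?thesis"
  hence "\<beta> v \<le> 0 \<or> v \<le> \<beta> v" by linarith
  hence no_gain: "(v - \<beta> v) * win_prob V x (\<beta> v) \<gamma> \<le> 0" if "is_strategy V x \<gamma>" for \<gamma>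
    using bid_payoff_nonpos[OF assms(1) that] by blast
  have "weakly_dominated V x \<beta>"
  proof (rule weakly_dominated_fun_upd[OF assms(1,2,3,5) c(1)])
    show "(v - \<beta> v) * win_prob V x (\<beta> v) \<gamma> \<le> (v - c) * win_prob V x c \<gamma>"
      if "is_strategy V x \<gamma>" for \<gamma>
      using no_gain[OF that] win_prob_nonneg[of V x c \<gamma>] c
      by (meson diff_ge_0_iff_ge less_imp_le order_trans zero_le_mult_iff)
    show "(v - \<beta> v) * win_prob V x (\<beta> v) (\<lambda>_. 0) < (v - c) * win_prob V x c (\<lambda>_. 0)"
      using no_gain[OF is_strategy_zero] win_prob_against_zero_bidder[OF assms(1,2) c(2)] c by simp
  qed
  with assms(4) show False ..
qed

lemma strategy_index_form:
  assumes "is_strategy V x \<beta>"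
  defines "d \<equiv> V / real x"
  obtains b where "\<And>k. k \<le> x \<Longrightarrow> b k \<le> x \<and> \<beta> (real k * d) = real (b k) * d"
proof -
  have "\<forall>k. \<exists>j. k \<le> x \<longrightarrow> j \<le> x \<and> \<beta> (real k * d) = real j * d"
    using assms grid_point unfolding is_strategy_def grid_def d_def by fastforce
  then obtain b where "\<forall>k. k \<le> x \<longrightarrow> b k \<le> x \<and> \<beta> (real k * d) = real (b k) * d"
    by metis
  thus ?thesis using that by blast
qed

lemma win_prob_index:
  assumes "V > 0" "1 \<le> x"
  defines "d \<equiv> V / real x"
  assumes b: "\<And>k. k \<le> x \<Longrightarrow> b k \<le> x \<and> \<beta> (real k * d) = real (b k) * d"
  shows "win_prob V x (real j * d) \<beta> = real (count_below x b j) / real (x + 1)"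
proof -
  have "0 < d" using assms by simp
  have grid: "grid V x = (\<lambda>k. real k * d) ` {0..x}"
    unfolding grid_def d_def ..
  have "{w \<in> grid V x. \<beta> w < real j * d} = (\<lambda>k. real k * d) ` {i \<in> {0..x}. b i < j}"
  proof (intro equalityI subsetI)
    fix w assume "w \<in> {w \<in> grid V x. \<beta> w < real j * d}"
    then obtain i where i: "i \<le> x" "w = real i * d" "\<beta> w < real j * d"
      unfolding grid by auto
    hence "real (b i) * d < real j * d"
      using b[OF i(1)] by simp
    hence "b i < j"
      using \<open>0 < d\<close> by (simp add: mult_less_cancel_right)
    thus "w \<in> (\<lambda>k. real k * d) ` {i \<in> {0..x}. b i < j}"
      using i by (intro image_eqI[of _ _ i]) auto
  next
    fix w assume "w \<in> (\<lambda>k. real k * d) ` {i \<in> {0..x}. b i < j}"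
    then obtain i where i: "i \<le> x" "b i < j" "w = real i * d" by auto
    hence "\<beta> w < real j * d"
      using b[OF i(1)] \<open>0 < d\<close> by (simp add: mult_less_cancel_right)
    thus "w \<in> {w \<in> grid V x. \<beta> w < real j * d}"
      unfolding grid using i by auto
  qed
  hence "card {w \<in> grid V x. \<beta> w < real j * d} = count_below x b j"
    unfolding count_below_def d_def using inj_on_grid_points[OF assms(1,2)] by (simp add: card_image)
  thus ?thesis unfolding win_prob_def using card_grid[OF assms(1,2)] by simp
qed

lemma index_bidding_of_best_response:
  assumes "V > 0" "1 \<le> x" "best_response V x \<beta> \<beta>"
  defines "d \<equiv> V / real x"
  assumes b: "\<And>k. k \<le> x \<Longrightarrow> b k \<le> x \<and> \<beta> (real k * d) = real (b k) * d"
  shows "index_bidding x b"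
proof
  fix k c assume k: "k \<le> x" and c: "c \<le> x"
  have "(real k * d - real c * d) * win_prob V x (real c * d) \<beta>
      \<le> (real k * d - \<beta> (real k * d)) * win_prob V x (\<beta> (real k * d)) \<beta>"
    using best_response_pointwise[OF assms(1-3)] grid_point k c unfolding d_def by blast
  hence "d / real (x + 1) * ((real k - real c) * real (count_below x b c))
      \<le> d / real (x + 1) * ((real k - real (b k)) * real (count_below x b (b k)))"
    using b[OF k] win_prob_index[of V x b \<beta>, OF assms(1,2) b[unfolded d_def]] unfolding d_def
    by (simp add: algebra_simps)
  moreover have "0 < d / real (x + 1)" using assms(1,2) d_def by simp
  ultimately have "(real k - real c) * real (count_below x b c)
      \<le> (real k - real (b k)) * real (count_below x b (b k))"
    by (simp only: mult_le_cancel_left_pos)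
  hence "real_of_int ((int k - int c) * int (count_below x b c))
      \<le> real_of_int ((int k - int (b k)) * int (count_below x b (b k)))"
    by simp
  thus "(int k - int c) * int (count_below x b c) \<le> (int k - int (b k)) * int (count_below x b (b k))"
    by (simp only: of_int_le_iff)
qed (use b in blast)

theorem symmetric_equilibrium_bid_near_half:
  assumes V: "V > 0" and x: "1 \<le> x" and eq: "symmetric_equilibrium V x \<beta>"
  shows "\<forall>v\<in>grid V x. \<bar>\<beta> v - v / 2\<bar> \<le> V / real x / 2"
proof -
  define d where "d = V / real x"
  have "0 < d" using V x d_def by simp
  have br: "best_response V x \<beta> \<beta>" and nd: "\<not> weakly_dominated V x \<beta>"
    using eq unfolding symmetric_equilibrium_def equilibrium_def by auto
  hence s: "is_strategy V x \<beta>" unfolding best_response_def by simp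
  obtain b where b: "\<And>k. k \<le> x \<Longrightarrow> b k \<le> x \<and> \<beta> (real k * d) = real (b k) * d"
    using strategy_index_form[OF s] unfolding d_def by blast
  interpret index_bidding x b
    using index_bidding_of_best_response[OF V x br] b unfolding d_def by blast
  have grid_kd: "k \<le> x \<Longrightarrow> real k * d \<in> grid V x" for k
    using grid_point unfolding d_def by blast
  have le_value: "k \<le> x \<Longrightarrow> b k \<le> k" for k
    using undominated_bid_le_value[OF V x s nd grid_kd] b \<open>0 < d\<close> by force
  have between: "1 \<le> b k \<and> b k < k" if "2 \<le> k" "k \<le> x" for k
  proof -
    have "0 < \<beta> (real k * d) \<and> \<beta> (real k * d) < real k * d"
      using undominated_bid_strictly_between[OF V x s nd grid_kd[OF that(2)] grid_kd[OF x]]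
        that \<open>0 < d\<close> by simp
    thus ?thesis using b[OF that(2)] \<open>0 < d\<close> by (simp add: zero_less_mult_iff)
  qed
  have near_half: "\<bar>2 * int (b k) - int k\<bar> \<le> 1" if "k \<le> x" for k
    using index_bid_near_half[OF _ _ between] le_value[of 0] le_value[of 1] x that by simp
  show ?thesis
  proof
    fix v assume "v \<in> grid V x"
    then obtain k where k: "k \<le> x" "v = real k * d" unfolding grid_def d_def by auto
    have "\<beta> v - v / 2 = d / 2 * real_of_int (2 * int (b k) - int k)"
      using k b[OF k(1)] by (simp add: algebra_simps)
    hence "\<bar>\<beta> v - v / 2\<bar> = \<bar>d / 2\<bar> * \<bar>real_of_int (2 * int (b k) - int k)\<bar>"
      by (simp only: abs_mult)
    also have "\<dots> = d / 2 * \<bar>real_of_int (2 * int (b k) - int k)\<bar>"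
      using \<open>0 < d\<close> by simp
    also have "\<dots> \<le> d / 2"
      using near_half[OF k(1)] \<open>0 < d\<close> by (simp add: mult_le_cancel_left1 flip: of_int_abs)
    finally show "\<bar>\<beta> v - v / 2\<bar> \<le> V / real x / 2" unfolding d_def .
  qed
qed

section \<open>The expected highest bid\<close>

lemma sum_max_atMost:
  "(\<Sum>i\<le>n. \<Sum>j\<le>n. real (max i j)) = real n * (real n + 1) * (4 * real n + 5) / 6"
proof (induction n)
  case 0
  show ?case by simp
next
  case (Suc n)
  have "(\<Sum>i\<le>n. real (max i (Suc n))) = (\<Sum>i\<le>n. real (Suc n))"
       "(\<Sum>j\<le>n. real (max (Suc n) j)) = (\<Sum>j\<le>n. real (Suc n))"
    by (auto intro: sum.cong)
  moreover have "(\<Sum>i\<le>Suc n. \<Sum>j\<le>Suc n. real (max i j)) = (\<Sum>i\<le>n. \<Sum>j\<le>n. real (max i j))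
      + (\<Sum>i\<le>n. real (max i (Suc n))) + (\<Sum>j\<le>n. real (max (Suc n) j)) + real (Suc n)"
    by (simp add: sum.distrib algebra_simps)
  ultimately show ?case
    using Suc.IH by (simp add: field_simps)
qed

lemma expected_highest_bid_half:
  assumes V: "V > 0" and x: "1 \<le> x"
  shows "expected_highest_bid V x (\<lambda>v. v / 2) = V / 3 + V / (12 * (real x + 1))"
proof -
  define d where "d = V / real x"
  have "0 < d" using V x d_def by simp
  have grid: "grid V x = (\<lambda>k. real k * d) ` {0..x}" unfolding grid_def d_def ..
  have inj: "inj_on (\<lambda>k. real k * d) {0..x}" using inj_on_grid_points[OF V x] d_def by simp
  have "(\<Sum>v1\<in>grid V x. \<Sum>v2\<in>grid V x. max (v1 / 2) (v2 / 2))
      = (\<Sum>i\<in>{0..x}. \<Sum>j\<in>{0..x}. max (real i * d / 2) (real j * d / 2))"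
    unfolding grid by (simp add: sum.reindex[OF inj])
  also have "\<dots> = (\<Sum>i\<in>{0..x}. \<Sum>j\<in>{0..x}. d / 2 * real (max i j))"
    using \<open>0 < d\<close> by (intro sum.cong refl) (auto simp: max_def)
  also have "\<dots> = d / 2 * (\<Sum>i\<le>x. \<Sum>j\<le>x. real (max i j))"
    by (simp add: sum_distrib_left atLeast0AtMost)
  also have "\<dots> = V * (real x + 1) * (4 * real x + 5) / 12"
    unfolding sum_max_atMost d_def using x by (simp add: field_simps)
  finally have sum: "(\<Sum>v1\<in>grid V x. \<Sum>v2\<in>grid V x. max (v1 / 2) (v2 / 2))
      = V * (real x + 1) * (4 * real x + 5) / 12" .
  define y where "y = real x + 1"
  have "0 < y" unfolding y_def by simp
  hence "V * y * (4 * y + 1) / 12 / y^2 = V / 3 + V / (12 * y)"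
    by (simp add: field_simps power2_eq_square)
  thus ?thesis
    unfolding y_def expected_highest_bid_def card_grid[OF V x] sum by (simp add: algebra_simps)
qed

lemma expected_highest_bid_diff_le:
  assumes V: "V > 0" and x: "1 \<le> x" and close: "\<forall>v\<in>grid V x. \<bar>\<beta> v - \<gamma> v\<bar> \<le> e"
  shows "\<bar>expected_highest_bid V x \<beta> - expected_highest_bid V x \<gamma>\<bar> \<le> e"
proof -
  let ?G = "grid V x"
  have n: "real (card ?G) = real x + 1" using card_grid[OF V x] by simp
  have "\<bar>(\<Sum>v1\<in>?G. \<Sum>v2\<in>?G. max (\<beta> v1) (\<beta> v2)) - (\<Sum>v1\<in>?G. \<Sum>v2\<in>?G. max (\<gamma> v1) (\<gamma> v2))\<bar>
      \<le> (\<Sum>v1\<in>?G. \<Sum>v2\<in>?G. \<bar>max (\<beta> v1) (\<beta> v2) - max (\<gamma> v1) (\<gamma> v2)\<bar>)"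
    unfolding sum_subtractf[symmetric] by (rule order_trans[OF sum_abs sum_mono[OF sum_abs]])
  also have "\<dots> \<le> (\<Sum>v1\<in>?G. \<Sum>v2\<in>?G. e)"
  proof (intro sum_mono)
    fix v1 v2 assume "v1 \<in> ?G" "v2 \<in> ?G"
    with close have "\<bar>\<beta> v1 - \<gamma> v1\<bar> \<le> e" "\<bar>\<beta> v2 - \<gamma> v2\<bar> \<le> e" by auto
    thus "\<bar>max (\<beta> v1) (\<beta> v2) - max (\<gamma> v1) (\<gamma> v2)\<bar> \<le> e" by (auto simp: max_def abs_le_iff)
  qed
  also have "\<dots> = real (card ?G) ^ 2 * e"
    by (simp add: power2_eq_square)
  finally have "\<bar>expected_highest_bid V x \<beta> - expected_highest_bid V x \<gamma>\<bar> * real (card ?G) ^ 2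
      \<le> real (card ?G) ^ 2 * e"
    unfolding expected_highest_bid_def diff_divide_distrib[symmetric] abs_divide using n by simp
  thus ?thesis using n by (simp add: mult.commute)
qed

lemma abs_Max_abs_image_le:
  fixes f :: "'a \<Rightarrow> real"
  assumes "finite A" "a \<in> A" "\<forall>a\<in>A. \<bar>f a\<bar> \<le> e"
  shows "\<bar>Max ((\<lambda>a. \<bar>f a\<bar>) ` A)\<bar> \<le> e"
proof -
  have "\<bar>f a\<bar> \<le> Max ((\<lambda>a. \<bar>f a\<bar>) ` A)"
    using assms by (intro Max_ge) auto
  moreover have "Max ((\<lambda>a. \<bar>f a\<bar>) ` A) \<le> e"
    using assms by (subst Max_le_iff) auto
  ultimately show ?thesis by linarith
qed

theorem corollary6:
  fixes V :: real
  assumes "V > 0"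
  shows "(\<forall>x::nat. \<forall>\<beta>. x \<ge> 1 \<longrightarrow> symmetric_equilibrium V x \<beta> \<longrightarrow>
            (\<forall>v\<in>grid V x. \<bar>\<beta> v - v / 2\<bar> \<le> (V / real x) / 2))
       \<and> (\<forall>\<beta> :: nat \<Rightarrow> real \<Rightarrow> real. (\<forall>x\<ge>1. symmetric_equilibrium V x (\<beta> x)) \<longrightarrow>
            ((\<lambda>x. Max ((\<lambda>v. \<bar>\<beta> x v - v / 2\<bar>) ` grid V x)) \<longlonglongrightarrow> 0)
          \<and> ((\<lambda>x. expected_highest_bid V x (\<beta> x)) \<longlonglongrightarrow> V / 3))"
proof (intro conjI allI impI)
  show "\<forall>v\<in>grid V x. \<bar>\<beta> v - v / 2\<bar> \<le> V / real x / 2"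
    if "1 \<le> x" "symmetric_equilibrium V x \<beta>" for x \<beta>
    using symmetric_equilibrium_bid_near_half[OF assms that] .
next
  fix \<beta> :: "nat \<Rightarrow> real \<Rightarrow> real"
  assume eq: "\<forall>x\<ge>1. symmetric_equilibrium V x (\<beta> x)"
  have near: "\<forall>\<^sub>F x in sequentially. 1 \<le> x \<and> (\<forall>v\<in>grid V x. \<bar>\<beta> x v - v / 2\<bar> \<le> V / real x / 2)"
    using eventually_ge_at_top[of 1]
  proof (rule eventually_mono)
    show "1 \<le> x \<and> (\<forall>v\<in>grid V x. \<bar>\<beta> x v - v / 2\<bar> \<le> V / real x / 2)" if "1 \<le> x" for x :: nat
      using symmetric_equilibrium_bid_near_half[OF assms that] eq that by blast
  qed
  have step: "(\<lambda>x. V / real x / 2) \<longlonglongrightarrow> 0" by real_asymp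
  show "(\<lambda>x. Max ((\<lambda>v. \<bar>\<beta> x v - v / 2\<bar>) ` grid V x)) \<longlonglongrightarrow> 0"
    using near by (intro Lim_null_comparison[OF _ step])
      (auto elim!: eventually_mono intro!: abs_Max_abs_image_le finite_grid zero_in_grid)
  have "(\<lambda>x. V / 3 + V / (12 * (real x + 1))) \<longlonglongrightarrow> V / 3" by real_asymp
  moreover have "\<forall>\<^sub>F x in sequentially. V / 3 + V / (12 * (real x + 1)) = expected_highest_bid V x (\<lambda>v. v / 2)"
    using eventually_ge_at_top[of 1] by (rule eventually_mono) (simp add: expected_highest_bid_half[OF assms])
  ultimately have half: "(\<lambda>x. expected_highest_bid V x (\<lambda>v. v / 2)) \<longlonglongrightarrow> V / 3"
    by (rule Lim_transform_eventually)
  show "(\<lambda>x. expected_highest_bid V x (\<beta> x)) \<longlonglongrightarrow> V / 3"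
    using near by (intro Lim_transform[OF half] Lim_null_comparison[OF _ step])
      (auto elim!: eventually_mono intro!: expected_highest_bid_diff_le[OF assms])
qed

end
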